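(* Let $g,h>\tfrac12$ and let $\mathcal{D}=((d_1,t_1),\ldots,(d_M,t_M))$ be an ordered list of pairwise distinct seed labels, valid both for the parameters $(g,h)$ and $(h,g)$, which is mirror symmetric, i.e. $\{d_j: t_j=\mathrm{I}\}=\{d_j: t_j=\mathrm{II}\}$ as sets. Then for every $n\in\mathbb{Z}_{\ge0}$ and $-1<\eta<1$, $$P_{\mathcal{D},n}\big(-\eta;(g,h)\big)=(-1)^nP_{\mathcal{D},n}\big(\eta;(h,g)\big),\qquad \Xi_{\mathcal{D}}\big(-\eta;(g,h)\big)=\Xi_{\mathcal{D}}\big(\eta;(h,g)\big).$$
   Context: $[a]'$ denotes the greatest integer strictly less than $a$; $(a)_k=a(a+1)\cdots(a+k-1)$, $(a)_0=1$. For real $\alpha,\beta$, $m\in\mathbb{Z}_{\ge0}$, $P^{(\alpha,\beta)}_m(\eta)=\frac{1}{m!}\sum_{k=0}^m\frac{(-m)_k(m+\alpha+\beta+1)_k(\alpha+k+1)_{m-k}}{k!}\big(\frac{1-\eta}{2}\big)^k$. For parameters $(g,h)$, a seed label is a pair $(\mathrm{v},t)$, $t\in\{\mathrm{I},\mathrm{II}\}$, with $\mathrm{v}\in\{0,\ldots,[h-\frac12]'\}$ if $t=\mathrm{I}$ and $\mathrm{v}\in\{0,\ldots,[g-\frac12]'\}$ if $t=\mathrm{II}$. For $-1<\eta<1$ let $\mu_{(\mathrm{v},\mathrm{I})}(\eta;(g,h))=\big(\frac{1+\eta}{2}\big)^{\frac12-h}P^{(g-\frac12,\frac12-h)}_{\mathrm{v}}(\eta)$,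 $\mu_{(\mathrm{v},\mathrm{II})}(\eta;(g,h))=\big(\frac{1-\eta}{2}\big)^{\frac12-g}P^{(\frac12-g,h-\frac12)}_{\mathrm{v}}(\eta)$, $P_n(\eta;(g,h))=P^{(g-\frac12,h-\frac12)}_n(\eta)$, and $\mathrm{W}[f_1,\ldots,f_r](\eta)=\det\big(\frac{d^{j-1}f_k}{d\eta^{j-1}}\big)_{1\le j,k\le r}$. For an ordered list $\mathcal{D}$ of seed labels with $M_{\mathrm{I}}$ of Type I and $M_{\mathrm{II}}$ of Type II, $\Xi_{\mathcal{D}}(\eta;(g,h))=\mathrm{W}[\mu_{(d_1,t_1)},\ldots,\mu_{(d_M,t_M)}](\eta)\big(\frac{1-\eta}{2}\big)^{(M_{\mathrm{I}}+g-\frac12)M_{\mathrm{II}}}\big(\frac{1+\eta}{2}\big)^{(M_{\mathrm{II}}+h-\frac12)M_{\mathrm{I}}}$ and $P_{\mathcal{D},n}(\eta;(g,h))=\mathrm{W}[\mu_{(d_1,t_1)},\ldots,\mu_{(d_M,t_M)},P_n](\eta)\big(\frac{1-\eta}{2}\big)^{(M_{\mathrm{I}}+g+\frac12)M_{\mathrm{II}}}\big(\frac{1+\eta}{2}\big)^{(M_{\mathrm{II}}+h+\frac12)M_{\mathrm{I}}}$, with all $\mu$'s and $P_n$ at parameters $(g,h)$; these are polynomials in $\eta$. *)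

theory Defs
  imports "HOL-Analysis.Analysis" "HOL-Combinatorics.Permutations"
begin

definition gint_less :: "real \<Rightarrow> int" where
  "gint_less a = \<lceil>a\<rceil> - 1"

definition jacobiP :: "real \<Rightarrow> real \<Rightarrow> nat \<Rightarrow> real \<Rightarrow> real" where
  "jacobiP \<alpha> \<beta> m \<eta> = (1 / fact m) *
     (\<Sum>k=0..m. pochhammer (- real m) k * pochhammer (real m + \<alpha> + \<beta> + 1) k
                 * pochhammer (\<alpha> + real k + 1) (m - k) / fact k * ((1 - \<eta>) / 2) ^ k)"

datatype seedtype = TI | TII

type_synonym seedlabel = "nat \<times> seedtype"

definition valid_seed :: "real \<Rightarrow> real \<Rightarrow> seedlabel \<Rightarrow> bool" where
  "valid_seed g h d = (case d of
      (v, TI) \<Rightarrow> int v \<le> gint_less (h - 1/2)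
    | (v, TII) \<Rightarrow> int v \<le> gint_less (g - 1/2))"

definition mu :: "seedlabel \<Rightarrow> real \<Rightarrow> real \<Rightarrow> real \<Rightarrow> real" where
  "mu d g h \<eta> = (case d of
      (v, TI) \<Rightarrow> ((1 + \<eta>) / 2) powr (1/2 - h) * jacobiP (g - 1/2) (1/2 - h) v \<eta>
    | (v, TII) \<Rightarrow> ((1 - \<eta>) / 2) powr (1/2 - g) * jacobiP (1/2 - g) (h - 1/2) v \<eta>)"

definition Pn :: "nat \<Rightarrow> real \<Rightarrow> real \<Rightarrow> real \<Rightarrow> real" where
  "Pn n g h \<eta> = jacobiP (g - 1/2) (h - 1/2) n \<eta>"

definition wronskian :: "(real \<Rightarrow> real) list \<Rightarrow> real \<Rightarrow> real" where
  "wronskian fs x = (\<Sum>p | p permutes {0..<length fs}.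
       of_int (sign p) * (\<Prod>j<length fs. (deriv ^^ j) (fs ! (p j)) x))"

definition MI :: "seedlabel list \<Rightarrow> nat" where
  "MI D = length (filter (\<lambda>d. snd d = TI) D)"

definition MII :: "seedlabel list \<Rightarrow> nat" where
  "MII D = length (filter (\<lambda>d. snd d = TII) D)"

definition Xi :: "seedlabel list \<Rightarrow> real \<Rightarrow> real \<Rightarrow> real \<Rightarrow> real" where
  "Xi D g h \<eta> = wronskian (map (\<lambda>d. mu d g h) D) \<eta>
     * ((1 - \<eta>) / 2) powr ((real (MI D) + g - 1/2) * real (MII D))
     * ((1 + \<eta>) / 2) powr ((real (MII D) + h - 1/2) * real (MI D))"

definition PD :: "seedlabel list \<Rightarrow> nat \<Rightarrow> real \<Rightarrow> real \<Rightarrow> real \<Rightarrow> real" where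
  "PD D n g h \<eta> = wronskian (map (\<lambda>d. mu d g h) D @ [Pn n g h]) \<eta>
     * ((1 - \<eta>) / 2) powr ((real (MI D) + g + 1/2) * real (MII D))
     * ((1 + \<eta>) / 2) powr ((real (MII D) + h + 1/2) * real (MI D))"

definition mirror_symmetric :: "seedlabel list \<Rightarrow> bool" where
  "mirror_symmetric D = ({v. (v, TI) \<in> set D} = {v. (v, TII) \<in> set D})"

end

theory Submission
  imports Defs
begin

(* Writing P^(a,b)_n as a sum of binomial products in (x-1)/2 and (x+1)/2 shows
   P^(a,b)_n(-x) = (-1)^n P^(b,a)_n(x).  Hence under (g,h) -> (h,g), x -> -x the seed mu_(v,I) becomes
   (-1)^v mu_(v,II) and vice versa, and P_n picks up (-1)^n.  In the Wronskian this scales column k by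
   (-1)^(d_k), row j by (-1)^j (chain rule), and permutes the columns by the involution pairing (v,I)
   with (v,II).  Mirror symmetry makes this involution fixed-point free, so M is even, its sign
   (-1)^(M/2) cancels the row signs, the column signs cancel in pairs, and M_I = M_II makes the
   prefactors of Xi and P_D swap exactly. *)

lemma sum_gbinomial_choose_convolution:
  assumes "k \<le> n"
  shows "(\<Sum>s\<le>k. ((real n + \<alpha>) gchoose (n - s)) * ((real n + \<beta>) gchoose s) * real (n - s choose (k - s)))
       = ((real n + \<alpha>) gchoose (n - k)) * ((real n + \<alpha> + \<beta> + real k) gchoose k)"
proof -
  have trinomial: "((real n + \<alpha>) gchoose (n - s)) * ((real n + \<beta>) gchoose s) * real (n - s choose (k - s))
      = ((real n + \<alpha>) gchoose (n - k)) * (((real n + \<beta>) gchoose s) * ((\<alpha> + real k) gchoose (k - s)))"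
    if "s \<le> k" for s
  proof -
    have "n - s choose (k - s) = n - s choose ((n - s) - (k - s))"
      using that assms by (intro binomial_symmetric) simp
    then have "real (n - s choose (k - s)) = real (n - s) gchoose (n - k)"
      using that assms by (simp add: binomial_gbinomial)
    moreover have "((real n + \<alpha>) gchoose (n - s)) * (real (n - s) gchoose (n - k))
        = ((real n + \<alpha>) gchoose (n - k)) * ((real n + \<alpha> - real (n - k)) gchoose ((n - s) - (n - k)))"
      using that assms by (intro gbinomial_trinomial_revision) auto
    moreover have "real n + \<alpha> - real (n - k) = \<alpha> + real k" "(n - s) - (n - k) = k - s"
      using that assms by (simp_all add: of_nat_diff)
    ultimately have "((real n + \<alpha>) gchoose (n - s)) * real (n - s choose (k - s))
        = ((real n + \<alpha>) gchoose (n - k)) * ((\<alpha> + real k) gchoose (k - s))"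
      by simp
    then show ?thesis by (metis mult.assoc mult.commute)
  qed
  have "(\<Sum>s\<le>k. ((real n + \<alpha>) gchoose (n - s)) * ((real n + \<beta>) gchoose s) * real (n - s choose (k - s)))
      = ((real n + \<alpha>) gchoose (n - k)) * (\<Sum>s=0..k. ((real n + \<beta>) gchoose s) * ((\<alpha> + real k) gchoose (k - s)))"
    by (simp add: sum_distrib_left atLeast0AtMost trinomial)
  also have "(\<Sum>s=0..k. ((real n + \<beta>) gchoose s) * ((\<alpha> + real k) gchoose (k - s)))
      = (real n + \<alpha> + \<beta> + real k) gchoose k"
    using gbinomial_Vandermonde[of "real n + \<beta>" "\<alpha> + real k" k] by (simp add: algebra_simps)
  finally show ?thesis .
qed

lemma jacobiP_coeff_eq_gbinomial:
  assumes "k \<le> n"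
  shows "pochhammer (- real n) k * pochhammer (real n + \<alpha> + \<beta> + 1) k * pochhammer (\<alpha> + real k + 1) (n - k)
           / fact k / fact n
       = (-1) ^ k * ((real n + \<alpha>) gchoose (n - k)) * ((real n + \<alpha> + \<beta> + real k) gchoose k)"
proof -
  have "pochhammer (real n - real k + 1) k / fact k = fact n / (fact k * fact (n - k))"
    using assms by (simp add: gbinomial_pochhammer'[symmetric] binomial_gbinomial[symmetric] binomial_fact)
  then have minus_n: "pochhammer (- real n) k = (-1) ^ k * (fact n / fact (n - k))"
    by (simp add: pochhammer_minus field_simps)
  have alpha: "(real n + \<alpha>) gchoose (n - k) = pochhammer (\<alpha> + real k + 1) (n - k) / fact (n - k)"
    using assms by (simp add: gbinomial_pochhammer' of_nat_diff algebra_simps)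
  have alpha_beta: "(real n + \<alpha> + \<beta> + real k) gchoose k = pochhammer (real n + \<alpha> + \<beta> + 1) k / fact k"
    by (simp add: gbinomial_pochhammer' algebra_simps)
  show ?thesis unfolding minus_n alpha alpha_beta by (simp add: field_simps)
qed

lemma jacobiP_binomial_sum:
  "jacobiP \<alpha> \<beta> n x = (\<Sum>s\<le>n. ((real n + \<alpha>) gchoose (n - s)) * ((real n + \<beta>) gchoose s)
                            * ((x - 1) / 2) ^ s * ((x + 1) / 2) ^ (n - s))"
proof -
  define w where "w = (1 - x) / 2"
  define A where "A s = ((real n + \<alpha>) gchoose (n - s)) * ((real n + \<beta>) gchoose s)" for s
  define f where "f s i = A s * real (n - s choose i) * (- w) ^ (s + i)" for s i
  have halves: "(x - 1) / 2 = - w" "(x + 1) / 2 = - w + 1" by (simp_all add: w_def field_simps)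
  have "(\<Sum>s\<le>n. ((real n + \<alpha>) gchoose (n - s)) * ((real n + \<beta>) gchoose s)
                            * ((x - 1) / 2) ^ s * ((x + 1) / 2) ^ (n - s))
      = (\<Sum>s\<le>n. A s * (- w) ^ s * (- w + 1) ^ (n - s))"
    by (simp only: halves A_def)
  also have "\<dots> = (\<Sum>s\<le>n. \<Sum>i\<le>n - s. f s i)"
    unfolding f_def binomial_ring by (simp add: sum_distrib_left power_add mult_ac)
  also have "\<dots> = (\<Sum>(s, i) \<in> Sigma {..n} (\<lambda>s. {..n - s}). f s i)"
    by (rule sum.Sigma) auto
  also have "Sigma {..n} (\<lambda>s. {..n - s}) = {(s, i). s + i \<le> n}" by auto
  also have "(\<Sum>(s, i) \<in> {(s, i). s + i \<le> n}. f s i) = (\<Sum>k\<le>n. \<Sum>s\<le>k. f s (k - s))"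
    by (rule sum.triangle_reindex_eq)
  also have "\<dots> = (\<Sum>k\<le>n. w ^ k * (pochhammer (- real n) k * pochhammer (real n + \<alpha> + \<beta> + 1) k
                                    * pochhammer (\<alpha> + real k + 1) (n - k) / fact k / fact n))"
  proof (rule sum.cong[OF refl])
    fix k assume "k \<in> {..n}"
    then have k: "k \<le> n" by simp
    have "(\<Sum>s\<le>k. f s (k - s)) = (- w) ^ k * (\<Sum>s\<le>k. A s * real (n - s choose (k - s)))"
      unfolding f_def by (simp add: sum_distrib_left mult_ac)
    also have "\<dots> = w ^ k * ((-1) ^ k * ((real n + \<alpha>) gchoose (n - k))
                                 * ((real n + \<alpha> + \<beta> + real k) gchoose k))"
      unfolding A_def sum_gbinomial_choose_convolution[OF k] by (subst power_minus) (simp only: mult_ac)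
    finally show "(\<Sum>s\<le>k. f s (k - s)) = w ^ k * (pochhammer (- real n) k
        * pochhammer (real n + \<alpha> + \<beta> + 1) k * pochhammer (\<alpha> + real k + 1) (n - k) / fact k / fact n)"
      by (simp only: jacobiP_coeff_eq_gbinomial[OF k])
  qed
  also have "\<dots> = jacobiP \<alpha> \<beta> n x"
    unfolding jacobiP_def w_def sum_distrib_left atLeast0AtMost
    by (rule sum.cong[OF refl]) (simp add: field_simps)
  finally show ?thesis ..
qed

lemma jacobiP_minus: "jacobiP \<alpha> \<beta> n (- x) = (-1) ^ n * jacobiP \<beta> \<alpha> n x"
proof -
  have "jacobiP \<alpha> \<beta> n (- x)
      = (\<Sum>s\<le>n. ((real n + \<alpha>) gchoose (n - (n - s))) * ((real n + \<beta>) gchoose (n - s))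
                 * ((- x - 1) / 2) ^ (n - s) * ((- x + 1) / 2) ^ (n - (n - s)))"
    unfolding jacobiP_binomial_sum
    by (rule sum.reindex_bij_witness[where i="\<lambda>s. n - s" and j="\<lambda>s. n - s"]) auto
  also have "\<dots> = (\<Sum>s\<le>n. (-1) ^ n * (((real n + \<beta>) gchoose (n - s)) * ((real n + \<alpha>) gchoose s)
                                     * ((x - 1) / 2) ^ s * ((x + 1) / 2) ^ (n - s)))"
  proof (rule sum.cong[OF refl])
    fix s assume "s \<in> {..n}"
    then have s: "s \<le> n" by simp
    have neg: "(- x - 1) / 2 = - ((x + 1) / 2)" "(- x + 1) / 2 = - ((x - 1) / 2)"
      by (simp_all add: field_simps)
    have "((- x - 1) / 2) ^ (n - s) = (-1) ^ (n - s) * ((x + 1) / 2) ^ (n - s)"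
         "((- x + 1) / 2) ^ s = (-1) ^ s * ((x - 1) / 2) ^ s"
      unfolding neg by (rule power_minus)+
    moreover have "(-1 :: real) ^ n = (-1) ^ (n - s) * (-1) ^ s"
      using s by (simp add: power_add[symmetric])
    ultimately show "((real n + \<alpha>) gchoose (n - (n - s))) * ((real n + \<beta>) gchoose (n - s))
        * ((- x - 1) / 2) ^ (n - s) * ((- x + 1) / 2) ^ (n - (n - s))
      = (-1) ^ n * (((real n + \<beta>) gchoose (n - s)) * ((real n + \<alpha>) gchoose s)
                   * ((x - 1) / 2) ^ s * ((x + 1) / 2) ^ (n - s))"
      using s by (simp add: mult_ac)
  qed
  finally show ?thesis unfolding jacobiP_binomial_sum by (simp add: sum_distrib_left)
qed

fun bipower_sum :: "(real \<times> real \<times> real) list \<Rightarrow> real \<Rightarrow> real" where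
  "bipower_sum [] x = 0"
| "bipower_sum ((c, a, b) # L) x = c * ((1 + x) / 2) powr a * ((1 - x) / 2) powr b + bipower_sum L x"

fun bipower_deriv_terms :: "(real \<times> real \<times> real) list \<Rightarrow> (real \<times> real \<times> real) list" where
  "bipower_deriv_terms [] = []"
| "bipower_deriv_terms ((c, a, b) # L) = (c * a / 2, a - 1, b) # (- (c * b / 2), a, b - 1) # bipower_deriv_terms L"

lemma bipower_sum_has_real_derivative:
  assumes "-1 < x" "x < 1"
  shows "(bipower_sum L has_real_derivative bipower_sum (bipower_deriv_terms L) x) (at x)"
proof (induction L)
  case Nil
  then show ?case by simp
next
  case (Cons t L)
  obtain c a b where t: "t = (c, a, b)" by (cases t) auto
  have "(1 + x) / 2 > 0" "(1 - x) / 2 > 0" using assms by auto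
  then have "((\<lambda>x. c * ((1 + x) / 2) powr a * ((1 - x) / 2) powr b) has_real_derivative
      c * a / 2 * ((1 + x) / 2) powr (a - 1) * ((1 - x) / 2) powr b
      - c * b / 2 * ((1 + x) / 2) powr a * ((1 - x) / 2) powr (b - 1)) (at x)"
    by (auto intro!: derivative_eq_intros simp: algebra_simps)
  from DERIV_add[OF this Cons.IH] show ?case
    unfolding t by (simp add: algebra_simps)
qed

(* A substitute for smoothness on (-1,1): the class is closed under deriv and contains every mu and P_n. *)
definition bipower_function :: "(real \<Rightarrow> real) \<Rightarrow> bool" where
  "bipower_function f \<longleftrightarrow> (\<exists>L. \<forall>x\<in>{-1<..<1}. f x = bipower_sum L x)"

lemma bipower_function_cong:
  "bipower_function f \<Longrightarrow> (\<And>x. x \<in> {-1<..<1} \<Longrightarrow> f x = f' x) \<Longrightarrow> bipower_function f'"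
  unfolding bipower_function_def by metis

lemma bipower_function_has_real_derivative:
  assumes "bipower_function f" "x \<in> {-1<..<1}"
  shows "(f has_real_derivative deriv f x) (at x)"
proof -
  obtain L where L: "\<forall>x\<in>{-1<..<1}. f x = bipower_sum L x"
    using assms(1) unfolding bipower_function_def by blast
  have "(f has_real_derivative bipower_sum (bipower_deriv_terms L) x) (at x)"
    by (rule has_field_derivative_transform_within_open[OF bipower_sum_has_real_derivative _ assms(2)])
       (use assms(2) L in auto)
  then show ?thesis by (simp add: DERIV_imp_deriv)
qed

lemma bipower_function_deriv: "bipower_function f \<Longrightarrow> bipower_function (deriv f)"
proof -
  assume "bipower_function f"
  then obtain L where L: "\<forall>x\<in>{-1<..<1}. f x = bipower_sum L x"
    unfolding bipower_function_def by blast
  have "deriv f x = bipower_sum (bipower_deriv_terms L) x" if "x \<in> {-1<..<1}" for x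
    using has_field_derivative_transform_within_open[OF bipower_sum_has_real_derivative _ that] that L
    by (auto intro!: DERIV_imp_deriv)
  then show "bipower_function (deriv f)" unfolding bipower_function_def by blast
qed

lemma bipower_function_higher_deriv: "bipower_function f \<Longrightarrow> bipower_function ((deriv ^^ j) f)"
  by (induction j) (simp_all add: bipower_function_deriv)

lemma higher_deriv_reflect:
  assumes "bipower_function G" and "\<forall>x\<in>{-1<..<1}. F x = c * G (- x)"
  shows "\<forall>x\<in>{-1<..<1}. (deriv ^^ j) F x = c * (-1) ^ j * (deriv ^^ j) G (- x)"
proof (induction j)
  case 0
  then show ?case using assms(2) by simp
next
  case (Suc j)
  show ?case
  proof
    fix x :: real assume x: "x \<in> {-1<..<1}"
    have "((deriv ^^ j) G has_real_derivative (deriv ^^ Suc j) G (- x)) (at (- x))"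
      using bipower_function_has_real_derivative[OF bipower_function_higher_deriv[OF assms(1)]] x by simp
    then have "((\<lambda>y. c * (-1) ^ j * (deriv ^^ j) G (- y)) has_real_derivative
        c * (-1) ^ Suc j * (deriv ^^ Suc j) G (- x)) (at x)"
      by (auto intro!: derivative_eq_intros DERIV_chain2[where g=uminus])
    then have "((deriv ^^ j) F has_real_derivative c * (-1) ^ Suc j * (deriv ^^ Suc j) G (- x)) (at x)"
      by (rule has_field_derivative_transform_within_open[OF _ _ x]) (use Suc in auto)
    then show "(deriv ^^ Suc j) F x = c * (-1) ^ Suc j * (deriv ^^ Suc j) G (- x)"
      by (simp add: DERIV_imp_deriv)
  qed
qed

lemma bipower_sum_map:
  "bipower_sum (map (\<lambda>k. (q k, a, b + real k)) ks) x
     = (\<Sum>k\<leftarrow>ks. q k * ((1 + x) / 2) powr a * ((1 - x) / 2) powr (b + real k))"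
  by (induction ks) auto

lemma bipower_function_jacobiP:
  "bipower_function (\<lambda>x. ((1 + x) / 2) powr a * ((1 - x) / 2) powr b * jacobiP \<alpha> \<beta> m x)"
proof -
  define q where "q k = pochhammer (- real m) k * pochhammer (real m + \<alpha> + \<beta> + 1) k
                        * pochhammer (\<alpha> + real k + 1) (m - k) / fact k / fact m" for k
  define L where "L = map (\<lambda>k. (q k, a, b + real k)) [0..<Suc m]"
  have "((1 + x) / 2) powr a * ((1 - x) / 2) powr b * jacobiP \<alpha> \<beta> m x = bipower_sum L x"
    if "x \<in> {-1<..<1}" for x
  proof -
    have w: "(1 - x) / 2 > 0" using that by auto
    have "bipower_sum L x = (\<Sum>k\<in>{0..<Suc m}. q k * ((1 + x) / 2) powr a * ((1 - x) / 2) powr (b + real k))"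
      unfolding L_def bipower_sum_map sum_set_upt_conv_sum_list_nat[symmetric] by simp
    also have "\<dots> = ((1 + x) / 2) powr a * ((1 - x) / 2) powr b * jacobiP \<alpha> \<beta> m x"
      unfolding jacobiP_def q_def sum_distrib_left atLeastLessThanSuc_atLeastAtMost
      by (rule sum.cong[OF refl]) (simp add: powr_add powr_realpow[OF w] field_simps)
    finally show ?thesis by simp
  qed
  then show ?thesis unfolding bipower_function_def by blast
qed

lemma bipower_function_mu: "bipower_function (mu d g h)"
proof -
  obtain v t where d: "d = (v, t)" by (cases d)
  show ?thesis
  proof (cases t)
    case TI
    show ?thesis
      by (rule bipower_function_cong[OF bipower_function_jacobiP[where b=0]]) (simp add: mu_def d TI)
  next
    case TII
    show ?thesis
      by (rule bipower_function_cong[OF bipower_function_jacobiP[where a=0]]) (simp add: mu_def d TII)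
  qed
qed

lemma bipower_function_Pn: "bipower_function (Pn n g h)"
  by (rule bipower_function_cong[OF bipower_function_jacobiP[where a=0 and b=0]]) (simp add: Pn_def)

lemma wronskian_scaled_permuted:
  assumes "length fs = M" "length gs = M" and \<sigma>: "\<sigma> permutes {0..<M}"
    and rel: "\<forall>i<M. \<forall>j<M. (deriv ^^ j) (fs ! i) x = c i * e j * (deriv ^^ j) (gs ! \<sigma> i) y"
  shows "wronskian fs x = (\<Prod>i<M. c i) * (\<Prod>j<M. e j) * of_int (sign \<sigma>) * wronskian gs y"
proof -
  define P where "P = {p. p permutes {0..<M}}"
  define T where "T q = (\<Prod>j<M. (deriv ^^ j) (gs ! q j) y)" for q :: "nat \<Rightarrow> nat"
  have "wronskian fs x = (\<Sum>p\<in>P. of_int (sign p) * ((\<Prod>i<M. c i) * (\<Prod>j<M. e j) * T (\<sigma> \<circ> p)))"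
    unfolding wronskian_def assms(1) P_def
  proof (rule sum.cong[OF refl])
    fix p assume "p \<in> {p. p permutes {0..<M}}"
    then have p: "p permutes {..<M}" by (simp add: atLeast0LessThan)
    have "(\<Prod>j<M. (deriv ^^ j) (fs ! p j) x) = (\<Prod>j<M. c (p j) * e j * (deriv ^^ j) (gs ! \<sigma> (p j)) y)"
      using rel permutes_in_image[OF p] by (intro prod.cong) auto
    also have "\<dots> = (\<Prod>i<M. c i) * (\<Prod>j<M. e j) * T (\<sigma> \<circ> p)"
      using prod.permute[OF p, of c] by (simp add: prod.distrib T_def comp_def)
    finally show "of_int (sign p) * (\<Prod>j<M. (deriv ^^ j) (fs ! p j) x)
        = of_int (sign p) * ((\<Prod>i<M. c i) * (\<Prod>j<M. e j) * T (\<sigma> \<circ> p))" by simp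
  qed
  also have "\<dots> = (\<Prod>i<M. c i) * (\<Prod>j<M. e j) * (\<Sum>p\<in>P. of_int (sign p) * T (\<sigma> \<circ> p))"
    by (simp add: sum_distrib_left mult_ac)
  also have "(\<Sum>p\<in>P. of_int (sign p) * T (\<sigma> \<circ> p)) = (\<Sum>q\<in>P. of_int (sign (inv \<sigma> \<circ> q)) * T q)"
    by (rule sum.reindex_bij_witness[where i="\<lambda>q. inv \<sigma> \<circ> q" and j="\<lambda>p. \<sigma> \<circ> p"])
       (use \<sigma> in \<open>auto simp: P_def o_assoc permutes_inv permutes_compose
                              permutes_inv_o[OF \<sigma>] permutes_surj[OF \<sigma>]\<close>)
  also have "\<dots> = of_int (sign \<sigma>) * (\<Sum>q\<in>P. of_int (sign q) * T q)"
    unfolding sum_distrib_left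
  proof (rule sum.cong[OF refl])
    fix q assume "q \<in> P"
    then have "permutation q" by (auto simp: P_def permutation_permutes)
    moreover have "permutation \<sigma>" "permutation (inv \<sigma>)"
      using \<sigma> permutes_inv[OF \<sigma>] by (auto simp: permutation_permutes)
    ultimately show "of_int (sign (inv \<sigma> \<circ> q)) * T q = of_int (sign \<sigma>) * (of_int (sign q) * T q)"
      by (simp add: sign_compose sign_inverse)
  qed
  also have "(\<Sum>q\<in>P. of_int (sign q) * T q) = wronskian gs y"
    unfolding wronskian_def assms(2) P_def T_def ..
  finally show ?thesis by (simp add: mult_ac)
qed

lemma fixpoint_free_involution_remove_orbit:
  fixes \<sigma> :: "'a \<Rightarrow> 'a"
  assumes \<sigma>: "\<sigma> permutes S" and invol: "\<forall>x\<in>S. \<sigma> (\<sigma> x) = x \<and> \<sigma> x \<noteq> x" and a: "a \<in> S"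
  defines "\<tau> \<equiv> Transposition.transpose a (\<sigma> a) \<circ> \<sigma>"
  shows "\<tau> permutes S - {a, \<sigma> a}"
    and "\<forall>x\<in>S - {a, \<sigma> a}. \<tau> x = \<sigma> x \<and> \<tau> (\<tau> x) = x \<and> \<tau> x \<noteq> x"
    and "finite S \<Longrightarrow> sign \<tau> = - sign \<sigma>"
proof -
  have b: "\<sigma> a \<in> S" "\<sigma> a \<noteq> a" "\<sigma> (\<sigma> a) = a"
    using permutes_in_image[OF \<sigma>] invol a by auto
  have away: "\<sigma> x \<noteq> a \<and> \<sigma> x \<noteq> \<sigma> a" if "x \<in> S - {a, \<sigma> a}" for x
    using that invol[rule_format, of x] b(3) by auto
  have "\<tau> permutes S"
    unfolding \<tau>_def by (rule permutes_compose[OF \<sigma> permutes_swap_id[OF a b(1)]])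
  then show "\<tau> permutes S - {a, \<sigma> a}"
    by (rule permutes_superset) (auto simp: \<tau>_def b)
  have \<tau>_eq: "\<tau> x = \<sigma> x" if "x \<in> S - {a, \<sigma> a}" for x
    using away[OF that] by (simp add: \<tau>_def)
  have "\<sigma> x \<in> S - {a, \<sigma> a}" if "x \<in> S - {a, \<sigma> a}" for x
    using away[OF that] permutes_in_image[OF \<sigma>] that by auto
  then show "\<forall>x\<in>S - {a, \<sigma> a}. \<tau> x = \<sigma> x \<and> \<tau> (\<tau> x) = x \<and> \<tau> x \<noteq> x"
    using invol by (simp add: \<tau>_eq)
  assume "finite S"
  then have "permutation \<sigma>" using \<sigma> by (auto simp: permutation_permutes)
  then show "sign \<tau> = - sign \<sigma>"
    unfolding \<tau>_def by (simp add: sign_compose permutation_swap_id sign_swap_id b(2)[symmetric])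
qed

lemma fixpoint_free_involution_sign:
  assumes "finite S" "\<sigma> permutes S" "\<forall>x\<in>S. \<sigma> (\<sigma> x) = x \<and> \<sigma> x \<noteq> x"
    and "\<forall>x\<in>S. c (\<sigma> x) = c x \<and> c x * c x = (1 :: real)"
  shows "even (card S) \<and> sign \<sigma> = (-1) ^ (card S div 2) \<and> (\<Prod>x\<in>S. c x) = 1"
  using assms
proof (induction "card S" arbitrary: S \<sigma> rule: less_induct)
  case less
  show ?case
  proof (cases "S = {}")
    case True
    then show ?thesis using less.prems by simp
  next
    case False
    then obtain a where a: "a \<in> S" by blast
    define S' where "S' = S - {a, \<sigma> a}"
    define \<tau> where "\<tau> = Transposition.transpose a (\<sigma> a) \<circ> \<sigma>"
    note \<tau> = fixpoint_free_involution_remove_orbit[OF less.prems(2,3) a, folded \<tau>_def S'_def]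
    have b: "\<sigma> a \<in> S" "\<sigma> a \<noteq> a" using permutes_in_image[OF less.prems(2)] less.prems(3) a by auto
    moreover have "card {a, \<sigma> a} \<le> card S" by (rule card_mono) (use less.prems(1) a b in auto)
    ultimately have card: "card S = card S' + 2"
      using less.prems(1) a by (simp add: S'_def card_Diff_subset)
    have "\<forall>x\<in>S'. \<tau> (\<tau> x) = x \<and> \<tau> x \<noteq> x" "\<forall>x\<in>S'. c (\<tau> x) = c x \<and> c x * c x = 1"
      using \<tau>(2) less.prems(4) unfolding S'_def by (blast, auto)
    then have "even (card S') \<and> sign \<tau> = (-1) ^ (card S' div 2) \<and> (\<Prod>x\<in>S'. c x) = 1"
      using less.prems(1) by (intro less.hyps[OF _ _ \<tau>(1)]) (simp_all add: card S'_def)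
    moreover have "(\<Prod>x\<in>S. c x) = c a * c (\<sigma> a) * (\<Prod>x\<in>S'. c x)"
      using less.prems(1) a b unfolding S'_def
      by (simp add: prod.remove[of S a] prod.remove[of "S - {a}" "\<sigma> a"] Diff_insert2[symmetric] mult_ac)
    ultimately show ?thesis
      using \<tau>(3)[OF less.prems(1)] less.prems(4) a card by simp
  qed
qed

fun mirror_label :: "seedlabel \<Rightarrow> seedlabel" where
  "mirror_label (v, TI) = (v, TII)"
| "mirror_label (v, TII) = (v, TI)"

lemma mirror_label_mirror_label [simp]: "mirror_label (mirror_label d) = d"
  and mirror_label_neq: "mirror_label d \<noteq> d"
  and fst_mirror_label [simp]: "fst (mirror_label d) = fst d"
  and snd_mirror_label_eq_TI [simp]: "snd (mirror_label d) = TI \<longleftrightarrow> snd d = TII"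
  and snd_mirror_label_eq_TII [simp]: "snd (mirror_label d) = TII \<longleftrightarrow> snd d = TI"
  by (cases d rule: mirror_label.cases; simp)+

lemma mirror_symmetric_mirror_label_mem:
  "mirror_symmetric D \<Longrightarrow> mirror_label d \<in> set D \<longleftrightarrow> d \<in> set D"
  by (cases d rule: mirror_label.cases) (auto simp: mirror_symmetric_def set_eq_iff)

lemma mu_mirror: "mu d h g x = (-1) ^ fst d * mu (mirror_label d) g h (- x)"
proof -
  obtain v t where d: "d = (v, t)" by (cases d)
  have "(-1 :: real) ^ v * (-1) ^ v = 1" by (simp add: power_add[symmetric])
  then show ?thesis
    by (cases t) (simp_all add: d mu_def jacobiP_minus mult_ac)
qed

lemma Pn_mirror: "Pn n h g x = (-1) ^ n * Pn n g h (- x)"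
proof -
  have "(-1 :: real) ^ n * (-1) ^ n = 1" by (simp add: power_add[symmetric])
  then show ?thesis by (simp add: Pn_def jacobiP_minus mult_ac)
qed

lemma higher_deriv_mu_mirror:
  "x \<in> {-1<..<1} \<Longrightarrow>
     (deriv ^^ j) (mu d h g) x = (-1) ^ fst d * (-1) ^ j * (deriv ^^ j) (mu (mirror_label d) g h) (- x)"
  using higher_deriv_reflect[OF bipower_function_mu] mu_mirror by blast

lemma higher_deriv_Pn_mirror:
  "x \<in> {-1<..<1} \<Longrightarrow> (deriv ^^ j) (Pn n h g) x = (-1) ^ n * (-1) ^ j * (deriv ^^ j) (Pn n g h) (- x)"
  using higher_deriv_reflect[OF bipower_function_Pn] Pn_mirror by blast

definition mirror_index :: "seedlabel list \<Rightarrow> nat \<Rightarrow> nat" where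
  "mirror_index D i = (if i < length D then (THE j. j < length D \<and> D ! j = mirror_label (D ! i)) else i)"

context
  fixes D :: "seedlabel list"
  assumes distinct: "distinct D" and mirror: "mirror_symmetric D"
begin

lemma mirror_index:
  assumes "i < length D"
  shows "mirror_index D i < length D" "D ! mirror_index D i = mirror_label (D ! i)"
proof -
  have "mirror_label (D ! i) \<in> set D"
    using assms mirror_symmetric_mirror_label_mem[OF mirror] by simp
  then obtain j where j: "j < length D" "D ! j = mirror_label (D ! i)" by (auto simp: in_set_conv_nth)
  moreover have "(THE j. j < length D \<and> D ! j = mirror_label (D ! i)) = j"
    using j nth_eq_iff_index_eq[OF distinct] by (intro the_equality) (simp, metis)
  ultimately show "mirror_index D i < length D" "D ! mirror_index D i = mirror_label (D ! i)"
    using assms by (simp_all add: mirror_index_def)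
qed

lemma mirror_index_mirror_index: "i < length D \<Longrightarrow> mirror_index D (mirror_index D i) = i"
  using mirror_index[of i] mirror_index[of "mirror_index D i"] nth_eq_iff_index_eq[OF distinct] by auto

lemma mirror_index_neq: "i < length D \<Longrightarrow> mirror_index D i \<noteq> i"
  using mirror_index[of i] mirror_label_neq by metis

lemma mirror_index_permutes: "mirror_index D permutes {0..<length D}"
proof (rule bij_imp_permutes)
  show "bij_betw (mirror_index D) {0..<length D} {0..<length D}"
    by (rule bij_betw_byWitness[where f'="mirror_index D"])
       (auto simp: mirror_index_mirror_index mirror_index)
qed (simp add: mirror_index_def)

lemma mirror_index_sign:
  "even (length D)"
  "of_int (sign (mirror_index D)) * (\<Prod>j<length D. (-1 :: real) ^ j) = 1"
  "(\<Prod>i<length D. (-1 :: real) ^ fst (D ! i)) = 1"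
proof -
  have "even (card {0..<length D}) \<and> sign (mirror_index D) = (-1) ^ (card {0..<length D} div 2)
        \<and> (\<Prod>i\<in>{0..<length D}. (-1 :: real) ^ fst (D ! i)) = 1"
    by (rule fixpoint_free_involution_sign[OF _ mirror_index_permutes])
       (auto simp: mirror_index mirror_index_mirror_index mirror_index_neq power_add[symmetric])
  moreover have "(\<Prod>j<2 * k. (-1 :: real) ^ j) = (-1) ^ k" for k
    by (induction k) (auto simp: power_add mult_2)
  ultimately show "even (length D)"
    "of_int (sign (mirror_index D)) * (\<Prod>j<length D. (-1 :: real) ^ j) = 1"
    "(\<Prod>i<length D. (-1 :: real) ^ fst (D ! i)) = 1"
    by (auto simp: atLeast0LessThan power_add[symmetric] elim!: evenE)
qed

lemma wronskian_mu_mirror: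
  assumes "x \<in> {-1<..<1}"
  shows "wronskian (map (\<lambda>d. mu d h g) D) x = wronskian (map (\<lambda>d. mu d g h) D) (- x)"
proof -
  have "wronskian (map (\<lambda>d. mu d h g) D) x
      = (\<Prod>i<length D. (-1) ^ fst (D ! i)) * (\<Prod>j<length D. (-1) ^ j) * of_int (sign (mirror_index D))
        * wronskian (map (\<lambda>d. mu d g h) D) (- x)"
    using higher_deriv_mu_mirror[OF assms] mirror_index
    by (intro wronskian_scaled_permuted mirror_index_permutes) auto
  then show ?thesis using mirror_index_sign by (simp add: mult_ac)
qed

lemma wronskian_mu_Pn_mirror:
  assumes "x \<in> {-1<..<1}"
  shows "wronskian (map (\<lambda>d. mu d h g) D @ [Pn n h g]) x
       = (-1) ^ n * wronskian (map (\<lambda>d. mu d g h) D @ [Pn n g h]) (- x)"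
proof -
  define M where "M = length D"
  define c where "c i = (if i < M then (-1) ^ fst (D ! i) else (-1 :: real) ^ n)" for i
  have "mirror_index D permutes {0..<Suc M}"
    using mirror_index_permutes by (rule permutes_subset) (auto simp: M_def)
  moreover have "mirror_index D M = M" by (simp add: mirror_index_def M_def)
  ultimately have "wronskian (map (\<lambda>d. mu d h g) D @ [Pn n h g]) x
      = (\<Prod>i<Suc M. c i) * (\<Prod>j<Suc M. (-1) ^ j) * of_int (sign (mirror_index D))
        * wronskian (map (\<lambda>d. mu d g h) D @ [Pn n g h]) (- x)"
    using higher_deriv_mu_mirror[OF assms] higher_deriv_Pn_mirror[OF assms] mirror_index
    by (intro wronskian_scaled_permuted) (auto simp: M_def c_def nth_append less_Suc_eq)
  then show ?thesis using mirror_index_sign by (simp add: M_def c_def mult_ac)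
qed

end

lemma MI_eq_MII:
  assumes "distinct D" "mirror_symmetric D"
  shows "MI D = MII D"
proof -
  have "{d \<in> set D. snd d = TII} = mirror_label ` {d \<in> set D. snd d = TI}"
  proof (intro equalityI subsetI)
    fix d assume "d \<in> {d \<in> set D. snd d = TII}"
    then show "d \<in> mirror_label ` {d \<in> set D. snd d = TI}"
      using mirror_symmetric_mirror_label_mem[OF assms(2), of "mirror_label d"]
      by (intro rev_image_eqI[of "mirror_label d"]) auto
  next
    fix d' assume "d' \<in> mirror_label ` {d \<in> set D. snd d = TI}"
    then obtain d where "d' = mirror_label d" "d \<in> set D" "snd d = TI" by blast
    then show "d' \<in> {d \<in> set D. snd d = TII}"
      using mirror_symmetric_mirror_label_mem[OF assms(2), of d] by simp
  qed
  moreover have "inj mirror_label" by (metis injI mirror_label_mirror_label)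
  ultimately show ?thesis
    unfolding MI_def MII_def distinct_length_filter[OF assms(1)]
    by (simp add: card_image inj_on_subset Collect_conj_eq Int_commute)
qed

theorem mainTheorem7:
  fixes g h :: real and D :: "seedlabel list" and n :: nat and \<eta> :: real
  assumes "g > 1/2" and "h > 1/2"
    and "distinct D"
    and "\<forall>d\<in>set D. valid_seed g h d \<and> valid_seed h g d"
    and "mirror_symmetric D"
    and "-1 < \<eta>" and "\<eta> < 1"
  shows "PD D n g h (- \<eta>) = (-1) ^ n * PD D n h g \<eta>
         \<and> Xi D g h (- \<eta>) = Xi D h g \<eta>"
proof -
  have \<eta>: "\<eta> \<in> {-1<..<1}" using assms(6,7) by simp
  note MI_eq_MII[OF assms(3,5)]
  moreover have "(-1 :: real) ^ n * (-1) ^ n = 1" by (simp add: power_add[symmetric])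
  moreover note wronskian_mu_mirror[OF assms(3,5) \<eta>, of h g]
    wronskian_mu_Pn_mirror[OF assms(3,5) \<eta>, of h g n]
  ultimately show ?thesis by (simp add: PD_def Xi_def mult_ac)
qed

end
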